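(* In the setting below, let $g_P,g_P^l,g_P^u$ be as defined there with prediction windows $D_n$, and let $g_0,g_0^l,g_0^u$ denote the same functions with every $D_n$ replaced by $0$. Let $\phi_P^*=\min_{\lambda\ge0}g_P(\lambda)$, $\phi_0^*=\min_{\lambda\ge0}g_0(\lambda)$, let $\lambda_0^*$ be a minimizer of $g_0^l$ and $\lambda_P^*$ a minimizer of $g_P^l$ over $\lambda\ge0$. Then $$g_P^l(\lambda_P^* )-g_0^u(\lambda_P^* )\le\phi_P^*-\phi_0^*\le g_P^u(\lambda_0^* )-g_0^l(\lambda_0^* ).$$
   Context: $N$ users; $B>0$. User $n$ has arrival rate $a_n\ge0$, a probability vector $\boldsymbol\eta_n$ on its channel states, $\beta_n\ge0$, integers $\tau_n\ge1$, $D_n\ge0$, a Markov channel on $\{1,\dots,K_n\}$ with transition matrix $(P_n^{i,j})$, a finite set $\mathcal E\subset[0,\infty)$ containing $0$ and a positive element, and $\zeta_n(i,\cdot):\mathcal E\to[0,1]$ with $\zeta_n(i,0)=0$, $\zeta_n(i,e)>0$ for $e>0$, strictly increasing; states are totally ordered by $\zeta_n$ (for all $i,j$ either $\zeta_n(i,e)\ge\zeta_n(j,e)\ \forall e$ or $\le\ \forall e$), with $i_n^{\max}$, $i_n^{\min}$ states of maximal and minimal $\zeta_n(\cdot,e)$ for all $e$. For $\lambda\ge0$: $V_n(0,0,i)=0$, $V_n(0,\tau,i)=\max_{e\in\mathcal E}\{-\lambda e+\zeta_n(i,e)\beta_n+(1-\zeta_n(i,e))\sum_jP_n^{i,j}V_n(0,\tau-1,j)\}$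 for $1\le\tau\le\tau_n+D_n$; $V_n^l(0)=0$, $V_n^l(\tau)=\max_{e\in\mathcal E,e>0}\frac{1-[1-\zeta_n(i_n^{\min},e)]^{\tau}}{\zeta_n(i_n^{\min},e)}[-\lambda e+\zeta_n(i_n^{\min},e)\beta_n]$; $V_n^u(0)=0$, $V_n^u(\tau)=\sum_{z=1}^{\tau}\max_{e\in\mathcal E}\{-\lambda e+\zeta_n(i_n^{\max},e)(\beta_n-\max\{0,V_n^l(z-1)\})\}$ (all depending on $\lambda$). Then $g_P(\lambda)=\lambda B+\sum_n a_n\sum_i\eta_n^iV_n(0,\tau_n+D_n,i)$, $g_P^u(\lambda)=\lambda B+\sum_n a_n\min\{\beta_n,V_n^u(\tau_n+D_n)\}$, $g_P^l(\lambda)=\lambda B+\sum_n a_n\max\{0,V_n^l(\tau_n+D_n)\}$. $g_P$ ($g_0$) is the Lagrange dual function with perfect prediction (no prediction), and $\phi_P^*$ ($\phi_0^*$) the optimal weighted timely-throughput. *)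

theory Defs
  imports Complex_Main
begin

text \<open>Finite-horizon value function with perfect prediction, for a single user.
  States are 1..K; zeta i e is the success probability; P i j the transition matrix.\<close>
fun Vdp :: "real \<Rightarrow> real set \<Rightarrow> (nat \<Rightarrow> real \<Rightarrow> real) \<Rightarrow> (nat \<Rightarrow> nat \<Rightarrow> real)
             \<Rightarrow> nat \<Rightarrow> real \<Rightarrow> nat \<Rightarrow> nat \<Rightarrow> real" where
  "Vdp lam E zeta P K beta 0 i = 0"
| "Vdp lam E zeta P K beta (Suc t) i =
     Max ((\<lambda>e. - lam * e + zeta i e * beta
               + (1 - zeta i e) * (\<Sum>j = 1..K. P i j * Vdp lam E zeta P K beta t j)) ` E)"

text \<open>Lower bound V^l, zmin e = zeta(i_min, e).\<close>
definition Vlow :: "real \<Rightarrow> real set \<Rightarrow> (real \<Rightarrow> real) \<Rightarrow> real \<Rightarrow> nat \<Rightarrow> real" where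
  "Vlow lam E zmin beta t =
     (if t = 0 then 0
      else Max ((\<lambda>e. (1 - (1 - zmin e) ^ t) / zmin e * (- lam * e + zmin e * beta))
                ` {e \<in> E. e > 0}))"

text \<open>Upper bound V^u, zmax e = zeta(i_max, e).\<close>
definition Vup :: "real \<Rightarrow> real set \<Rightarrow> (real \<Rightarrow> real) \<Rightarrow> (real \<Rightarrow> real) \<Rightarrow> real \<Rightarrow> nat \<Rightarrow> real" where
  "Vup lam E zmax zmin beta t =
     (\<Sum>z = 1..t. Max ((\<lambda>e. - lam * e + zmax e * (beta - max 0 (Vlow lam E zmin beta (z - 1)))) ` E))"

text \<open>Dual functions. Users are indexed by n < N; D is the vector of prediction windows.\<close>
definition gdual :: "nat \<Rightarrow> real \<Rightarrow> (nat \<Rightarrow> real) \<Rightarrow> (nat \<Rightarrow> nat \<Rightarrow> real) \<Rightarrow> (nat \<Rightarrow> real)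
    \<Rightarrow> (nat \<Rightarrow> nat) \<Rightarrow> (nat \<Rightarrow> nat) \<Rightarrow> (nat \<Rightarrow> nat \<Rightarrow> nat \<Rightarrow> real) \<Rightarrow> real set
    \<Rightarrow> (nat \<Rightarrow> nat \<Rightarrow> real \<Rightarrow> real) \<Rightarrow> (nat \<Rightarrow> nat) \<Rightarrow> real \<Rightarrow> real" where
  "gdual N B a eta beta tau K P E zeta D lam =
     lam * B + (\<Sum>n<N. a n * (\<Sum>i = 1..K n. eta n i *
        Vdp lam E (zeta n) (P n) (K n) (beta n) (tau n + D n) i))"

definition gdual_u :: "nat \<Rightarrow> real \<Rightarrow> (nat \<Rightarrow> real) \<Rightarrow> (nat \<Rightarrow> real) \<Rightarrow> (nat \<Rightarrow> nat)
    \<Rightarrow> real set \<Rightarrow> (nat \<Rightarrow> nat \<Rightarrow> real \<Rightarrow> real) \<Rightarrow> (nat \<Rightarrow> nat) \<Rightarrow> (nat \<Rightarrow> nat)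
    \<Rightarrow> (nat \<Rightarrow> nat) \<Rightarrow> real \<Rightarrow> real" where
  "gdual_u N B a beta tau E zeta imax imin D lam =
     lam * B + (\<Sum>n<N. a n * min (beta n)
        (Vup lam E (zeta n (imax n)) (zeta n (imin n)) (beta n) (tau n + D n)))"

definition gdual_l :: "nat \<Rightarrow> real \<Rightarrow> (nat \<Rightarrow> real) \<Rightarrow> (nat \<Rightarrow> real) \<Rightarrow> (nat \<Rightarrow> nat)
    \<Rightarrow> real set \<Rightarrow> (nat \<Rightarrow> nat \<Rightarrow> real \<Rightarrow> real) \<Rightarrow> (nat \<Rightarrow> nat)
    \<Rightarrow> (nat \<Rightarrow> nat) \<Rightarrow> real \<Rightarrow> real" where
  "gdual_l N B a beta tau E zeta imin D lam =
     lam * B + (\<Sum>n<N. a n * max 0 (Vlow lam E (zeta n (imin n)) (beta n) (tau n + D n)))"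

end

theory Submission
  imports Defs
begin

text \<open>For every \<open>\<lambda> \<ge> 0\<close> and every choice of prediction windows, the lower and upper dual functions
  sandwich the true one: \<open>g\<^sup>l \<le> g \<le> g\<^sup>u\<close>. Per user this is the bound
  \<open>max 0 (V\<^sup>l \<tau>) \<le> V(0,\<tau>,i) \<le> min \<beta> (V\<^sup>u \<tau>)\<close>, proved by induction on the horizon: \<open>V\<^sup>l\<close> is the
  value of a fixed power level used while the channel stays in its worst state, and \<open>V\<^sup>u\<close> adds
  up, slot by slot, the best possible one-step gain in the best state. The two-sided estimate
  on \<open>\<phi>\<^sub>P\<^sup>* - \<phi>\<^sub>0\<^sup>*\<close> then follows from comparing minima of sandwiched functions.\<close>

lemma convex_comb_ge:
  fixes p f :: "'a \<Rightarrow> real"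
  assumes "\<forall>j\<in>A. p j \<ge> 0" "sum p A = 1" "\<forall>j\<in>A. c \<le> f j"
  shows "c \<le> (\<Sum>j\<in>A. p j * f j)"
proof -
  have "c = (\<Sum>j\<in>A. p j * c)" using assms(2) by (simp add: sum_distrib_right[symmetric])
  also have "\<dots> \<le> (\<Sum>j\<in>A. p j * f j)" using assms by (intro sum_mono mult_left_mono) auto
  finally show ?thesis .
qed

lemma convex_comb_le:
  fixes p f :: "'a \<Rightarrow> real"
  assumes "\<forall>j\<in>A. p j \<ge> 0" "sum p A = 1" "\<forall>j\<in>A. f j \<le> c"
  shows "(\<Sum>j\<in>A. p j * f j) \<le> c"
proof -
  have "(\<Sum>j\<in>A. p j * f j) \<le> (\<Sum>j\<in>A. p j * c)" using assms by (intro sum_mono mult_left_mono) auto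
  also have "\<dots> = c" using assms(2) by (simp add: sum_distrib_right[symmetric])
  finally show ?thesis .
qed

lemma minimum_gap_bounds:
  fixes gP g0 lP l0 uP u0 :: "real \<Rightarrow> real"
  assumes sandwichP: "\<And>lam. lam \<ge> 0 \<Longrightarrow> lP lam \<le> gP lam \<and> gP lam \<le> uP lam"
    and sandwich0: "\<And>lam. lam \<ge> 0 \<Longrightarrow> l0 lam \<le> g0 lam \<and> g0 lam \<le> u0 lam"
    and phiP_min: "(\<exists>lam\<ge>0. gP lam = phiP) \<and> (\<forall>lam\<ge>0. phiP \<le> gP lam)"
    and phi0_min: "(\<exists>lam\<ge>0. g0 lam = phi0) \<and> (\<forall>lam\<ge>0. phi0 \<le> g0 lam)"
    and lamP_min: "lamP \<ge> 0 \<and> (\<forall>lam\<ge>0. lP lamP \<le> lP lam)"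
    and lam0_min: "lam0 \<ge> 0 \<and> (\<forall>lam\<ge>0. l0 lam0 \<le> l0 lam)"
  shows "lP lamP - u0 lamP \<le> phiP - phi0 \<and> phiP - phi0 \<le> uP lam0 - l0 lam0"
proof -
  obtain mP where mP: "mP \<ge> 0" "gP mP = phiP" using phiP_min by blast
  obtain m0 where m0: "m0 \<ge> 0" "g0 m0 = phi0" using phi0_min by blast
  have "lP lamP \<le> phiP" using lamP_min mP sandwichP[of mP] by force
  moreover have "phi0 \<le> u0 lamP" using phi0_min lamP_min sandwich0[of lamP] by force
  moreover have "phiP \<le> uP lam0" using phiP_min lam0_min sandwichP[of lam0] by force
  moreover have "l0 lam0 \<le> phi0" using lam0_min m0 sandwich0[of m0] by force
  ultimately show ?thesis by linarith
qed

locale single_user =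
  fixes lam beta :: real and E :: "real set" and zeta :: "nat \<Rightarrow> real \<Rightarrow> real"
    and P :: "nat \<Rightarrow> nat \<Rightarrow> real" and K :: nat and zmin zmax :: "real \<Rightarrow> real"
  assumes lam_nonneg: "lam \<ge> 0" and beta_nonneg: "beta \<ge> 0"
    and E_finite: "finite E" and E_nonneg: "\<forall>e\<in>E. e \<ge> 0" and E_zero: "0 \<in> E"
    and P_stochastic: "\<forall>i\<in>{1..K}. (\<forall>j\<in>{1..K}. P i j \<ge> 0) \<and> (\<Sum>j = 1..K. P i j) = 1"
    and zeta_range: "\<forall>i\<in>{1..K}. \<forall>e\<in>E. 0 \<le> zeta i e \<and> zeta i e \<le> 1"
    and zmin_le_zeta: "\<forall>i\<in>{1..K}. \<forall>e\<in>E. zmin e \<le> zeta i e"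
    and zmin_range: "\<forall>e\<in>E. 0 \<le> zmin e \<and> zmin e \<le> 1"
    and zmin_pos: "\<forall>e\<in>E. e > 0 \<longrightarrow> zmin e > 0"
    and zeta_le_zmax: "\<forall>i\<in>{1..K}. \<forall>e\<in>E. zeta i e \<le> zmax e"
begin

abbreviation V :: "nat \<Rightarrow> nat \<Rightarrow> real" where
  "V \<equiv> Vdp lam E zeta P K beta"

lemma V_Suc_ge:
  assumes "e \<in> E"
  shows "- lam * e + zeta i e * beta + (1 - zeta i e) * (\<Sum>j = 1..K. P i j * V t j) \<le> V (Suc t) i"
  using assms E_finite by (auto intro!: Max_ge)

lemma V_Suc_le:
  assumes "\<forall>e\<in>E. - lam * e + zeta i e * beta + (1 - zeta i e) * (\<Sum>j = 1..K. P i j * V t j) \<le> c"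
  shows "V (Suc t) i \<le> c"
proof -
  have "E \<noteq> {}" using E_zero by auto
  then show ?thesis using assms E_finite by simp
qed

lemma V_nonneg_le_beta: "\<forall>i\<in>{1..K}. 0 \<le> V t i \<and> V t i \<le> beta"
proof (induction t)
  case 0
  then show ?case using beta_nonneg by simp
next
  case (Suc t)
  show ?case
  proof
    fix i assume i: "i \<in> {1..K}"
    define A where "A = (\<Sum>j = 1..K. P i j * V t j)"
    have A: "0 \<le> A" "A \<le> beta" unfolding A_def
      using convex_comb_ge[of "{1..K}" "P i" 0 "V t"] convex_comb_le[of "{1..K}" "P i" "V t" beta]
        P_stochastic i Suc by auto
    have "0 \<le> - lam * 0 + zeta i 0 * beta + (1 - zeta i 0) * A"
      using zeta_range i E_zero A beta_nonneg by auto
    also have "\<dots> \<le> V (Suc t) i" using V_Suc_ge[OF E_zero] A_def by simp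
    finally have "0 \<le> V (Suc t) i" .
    moreover have "V (Suc t) i \<le> beta"
    proof (rule V_Suc_le, intro ballI)
      fix e assume e: "e \<in> E"
      have "lam * e \<ge> 0" using lam_nonneg E_nonneg e by auto
      moreover have "(1 - zeta i e) * A \<le> (1 - zeta i e) * beta"
        using zeta_range i e A by (auto intro: mult_left_mono)
      ultimately show "- lam * e + zeta i e * beta + (1 - zeta i e) * (\<Sum>j = 1..K. P i j * V t j) \<le> beta"
        by (simp add: A_def algebra_simps)
    qed
    ultimately show "0 \<le> V (Suc t) i \<and> V (Suc t) i \<le> beta" by simp
  qed
qed

definition worst_state_value :: "real \<Rightarrow> nat \<Rightarrow> real" where
  "worst_state_value e t = (1 - (1 - zmin e) ^ t) / zmin e * (- lam * e + zmin e * beta)"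

lemma worst_state_value_Suc:
  assumes "zmin e > 0"
  shows "worst_state_value e (Suc t) = - lam * e + zmin e * beta + (1 - zmin e) * worst_state_value e t"
  using assms unfolding worst_state_value_def by (simp add: field_simps)

lemma worst_state_value_le_beta:
  assumes "e \<in> E" "e > 0"
  shows "worst_state_value e t \<le> beta"
proof (induction t)
  case 0
  then show ?case using beta_nonneg by (simp add: worst_state_value_def)
next
  case (Suc t)
  have z: "zmin e > 0" "zmin e \<le> 1" using assms zmin_pos zmin_range by auto
  have "lam * e \<ge> 0" using lam_nonneg assms by auto
  moreover have "(1 - zmin e) * worst_state_value e t \<le> (1 - zmin e) * beta"
    using Suc z by (auto intro: mult_left_mono)
  ultimately show ?case by (simp add: worst_state_value_Suc[OF z(1)] algebra_simps)
qed

lemma worst_state_value_le_V: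
  assumes "e \<in> E" "e > 0"
  shows "\<forall>i\<in>{1..K}. worst_state_value e t \<le> V t i"
proof (induction t)
  case 0
  then show ?case by (simp add: worst_state_value_def)
next
  case (Suc t)
  show ?case
  proof
    fix i assume i: "i \<in> {1..K}"
    define w where "w = worst_state_value e t"
    define A where "A = (\<Sum>j = 1..K. P i j * V t j)"
    have "w \<le> A" unfolding A_def w_def
      using convex_comb_ge[of "{1..K}" "P i" "worst_state_value e t" "V t"] P_stochastic i Suc by auto
    moreover have zi: "zmin e \<le> zeta i e" "zeta i e \<le> 1" using zmin_le_zeta zeta_range i assms by auto
    ultimately have "(1 - zeta i e) * w \<le> (1 - zeta i e) * A" by (auto intro: mult_left_mono)
    \<comment> \<open>a better state only helps, since the continuation value \<open>w\<close> is at most the reward \<open>\<beta>\<close>\<close>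
    moreover have "(zeta i e - zmin e) * (beta - w) \<ge> 0"
      using zi worst_state_value_le_beta[OF assms] by (simp add: w_def)
    moreover have "zmin e > 0" using assms zmin_pos by auto
    ultimately have "worst_state_value e (Suc t) \<le> - lam * e + zeta i e * beta + (1 - zeta i e) * A"
      by (simp add: worst_state_value_Suc w_def algebra_simps)
    also have "\<dots> \<le> V (Suc t) i" using V_Suc_ge[OF assms(1)] A_def by simp
    finally show "worst_state_value e (Suc t) \<le> V (Suc t) i" .
  qed
qed

lemma Vlow_le_V:
  assumes "i \<in> {1..K}" "\<exists>e\<in>E. e > 0"
  shows "max 0 (Vlow lam E zmin beta t) \<le> V t i"
proof -
  have "Vlow lam E zmin beta t \<le> V t i"
  proof (cases "t = 0")
    case True
    then show ?thesis by (simp add: Vlow_def)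
  next
    case False
    have "{e \<in> E. e > 0} \<noteq> {}" using assms(2) by auto
    moreover have "\<forall>e\<in>{e \<in> E. e > 0}. worst_state_value e t \<le> V t i"
      using worst_state_value_le_V assms(1) by auto
    ultimately show ?thesis using False E_finite by (simp add: Vlow_def worst_state_value_def)
  qed
  then show ?thesis using V_nonneg_le_beta assms(1) by auto
qed

lemma Vup_Suc:
  "Vup lam E zmax zmin beta (Suc t) = Vup lam E zmax zmin beta t
     + Max ((\<lambda>e. - lam * e + zmax e * (beta - max 0 (Vlow lam E zmin beta t))) ` E)"
  unfolding Vup_def by (simp add: sum.cl_ivl_Suc)

lemma V_le_Vup:
  assumes "\<exists>e\<in>E. e > 0"
  shows "\<forall>i\<in>{1..K}. V t i \<le> Vup lam E zmax zmin beta t"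
proof (induction t)
  case 0
  then show ?case by (simp add: Vup_def)
next
  case (Suc t)
  define m where "m = max 0 (Vlow lam E zmin beta t)"
  show ?case
  proof
    fix i assume i: "i \<in> {1..K}"
    define A where "A = (\<Sum>j = 1..K. P i j * V t j)"
    have mA: "m \<le> A" "A \<le> beta" unfolding A_def m_def
      using convex_comb_ge[of "{1..K}" "P i" m "V t"] convex_comb_le[of "{1..K}" "P i" "V t" beta]
        P_stochastic i Vlow_le_V[OF _ assms] V_nonneg_le_beta by (auto simp: m_def)
    have AU: "A \<le> Vup lam E zmax zmin beta t" unfolding A_def
      using convex_comb_le[of "{1..K}" "P i" "V t" "Vup lam E zmax zmin beta t"] P_stochastic i Suc
      by auto
    show "V (Suc t) i \<le> Vup lam E zmax zmin beta (Suc t)"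
    proof (rule V_Suc_le, intro ballI)
      fix e assume e: "e \<in> E"
      have zi: "0 \<le> zeta i e" "zeta i e \<le> zmax e" using zeta_range zeta_le_zmax i e by auto
      have "zeta i e * (beta - A) \<le> zmax e * (beta - m)"
        using zi mA by (intro mult_mono) auto
      moreover have "- lam * e + zmax e * (beta - m) \<le> Max ((\<lambda>e. - lam * e + zmax e * (beta - m)) ` E)"
        using E_finite e by (auto intro!: Max_ge)
      ultimately show "- lam * e + zeta i e * beta + (1 - zeta i e) * (\<Sum>j = 1..K. P i j * V t j)
          \<le> Vup lam E zmax zmin beta (Suc t)"
        using AU by (simp add: Vup_Suc A_def m_def algebra_simps)
    qed
  qed
qed

lemma expected_V_bounds:
  assumes "\<exists>e\<in>E. e > 0" "\<forall>i\<in>{1..K}. eta i \<ge> 0" "(\<Sum>i = 1..K. eta i) = 1"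
  shows "max 0 (Vlow lam E zmin beta t) \<le> (\<Sum>i = 1..K. eta i * V t i)
    \<and> (\<Sum>i = 1..K. eta i * V t i) \<le> min beta (Vup lam E zmax zmin beta t)"
  using convex_comb_ge[of "{1..K}" eta "max 0 (Vlow lam E zmin beta t)" "V t"]
    convex_comb_le[of "{1..K}" eta "V t" "min beta (Vup lam E zmax zmin beta t)"]
    assms Vlow_le_V[OF _ assms(1)] V_nonneg_le_beta V_le_Vup[OF assms(1)] by auto

end

lemma gdual_sandwich:
  assumes a_nonneg: "\<forall>n<N. a n \<ge> 0"
    and beta_nonneg: "\<forall>n<N. beta n \<ge> 0"
    and eta_prob: "\<forall>n<N. (\<forall>i\<in>{1..K n}. eta n i \<ge> 0) \<and> (\<Sum>i = 1..K n. eta n i) = 1"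
    and P_stoch: "\<forall>n<N. \<forall>i\<in>{1..K n}. (\<forall>j\<in>{1..K n}. P n i j \<ge> 0) \<and> (\<Sum>j = 1..K n. P n i j) = 1"
    and E_fin: "finite E" and E_nonneg: "\<forall>e\<in>E. e \<ge> 0" and E_zero: "0 \<in> E"
    and E_pos: "\<exists>e\<in>E. e > 0"
    and zeta_range: "\<forall>n<N. \<forall>i\<in>{1..K n}. \<forall>e\<in>E. 0 \<le> zeta n i e \<and> zeta n i e \<le> 1"
    and zeta_pos: "\<forall>n<N. \<forall>i\<in>{1..K n}. \<forall>e\<in>E. e > 0 \<longrightarrow> zeta n i e > 0"
    and imax: "\<forall>n<N. imax n \<in> {1..K n} \<and> (\<forall>i\<in>{1..K n}. \<forall>e\<in>E. zeta n i e \<le> zeta n (imax n) e)"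
    and imin: "\<forall>n<N. imin n \<in> {1..K n} \<and> (\<forall>i\<in>{1..K n}. \<forall>e\<in>E. zeta n (imin n) e \<le> zeta n i e)"
    and lam: "lam \<ge> 0"
  shows "gdual_l N B a beta tau E zeta imin D lam \<le> gdual N B a eta beta tau K P E zeta D lam
    \<and> gdual N B a eta beta tau K P E zeta D lam \<le> gdual_u N B a beta tau E zeta imax imin D lam"
proof -
  have user_bounds: "max 0 (Vlow lam E (zeta n (imin n)) (beta n) t)
      \<le> (\<Sum>i = 1..K n. eta n i * Vdp lam E (zeta n) (P n) (K n) (beta n) t i)
    \<and> (\<Sum>i = 1..K n. eta n i * Vdp lam E (zeta n) (P n) (K n) (beta n) t i)
      \<le> min (beta n) (Vup lam E (zeta n (imax n)) (zeta n (imin n)) (beta n) t)"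
    if n: "n < N" for n t
  proof -
    interpret single_user lam "beta n" E "zeta n" "P n" "K n" "zeta n (imin n)" "zeta n (imax n)"
    proof
      show "\<forall>e\<in>E. 0 \<le> zeta n (imin n) e \<and> zeta n (imin n) e \<le> 1"
        using zeta_range imin n by blast
      show "\<forall>e\<in>E. 0 < e \<longrightarrow> 0 < zeta n (imin n) e"
        using zeta_pos imin n by blast
    qed (use n lam beta_nonneg E_fin E_nonneg E_zero P_stoch zeta_range imin imax in auto)
    show ?thesis using expected_V_bounds[OF E_pos] eta_prob n by blast
  qed
  show ?thesis
    unfolding gdual_l_def gdual_def gdual_u_def
    using user_bounds a_nonneg by (auto intro!: sum_mono mult_left_mono)
qed

theorem theorem8:
  fixes N :: nat and B :: real
    and a :: "nat \<Rightarrow> real" and eta :: "nat \<Rightarrow> nat \<Rightarrow> real" and beta :: "nat \<Rightarrow> real"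
    and tau D K imax imin :: "nat \<Rightarrow> nat"
    and P :: "nat \<Rightarrow> nat \<Rightarrow> nat \<Rightarrow> real" and E :: "real set"
    and zeta :: "nat \<Rightarrow> nat \<Rightarrow> real \<Rightarrow> real"
    and phiP phi0 lamP lam0 :: real
  assumes B_pos: "B > 0"
    and a_nonneg: "\<forall>n<N. a n \<ge> 0"
    and beta_nonneg: "\<forall>n<N. beta n \<ge> 0"
    and tau_pos: "\<forall>n<N. tau n \<ge> 1"
    and K_pos: "\<forall>n<N. K n \<ge> 1"
    and eta_prob: "\<forall>n<N. (\<forall>i\<in>{1..K n}. eta n i \<ge> 0) \<and> (\<Sum>i = 1..K n. eta n i) = 1"
    and P_stoch: "\<forall>n<N. \<forall>i\<in>{1..K n}. (\<forall>j\<in>{1..K n}. P n i j \<ge> 0) \<and> (\<Sum>j = 1..K n. P n i j) = 1"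
    and E_fin: "finite E" and E_nonneg: "\<forall>e\<in>E. e \<ge> 0" and E_zero: "0 \<in> E"
    and E_pos: "\<exists>e\<in>E. e > 0"
    and zeta_range: "\<forall>n<N. \<forall>i\<in>{1..K n}. \<forall>e\<in>E. 0 \<le> zeta n i e \<and> zeta n i e \<le> 1"
    and zeta_zero: "\<forall>n<N. \<forall>i\<in>{1..K n}. zeta n i 0 = 0"
    and zeta_pos: "\<forall>n<N. \<forall>i\<in>{1..K n}. \<forall>e\<in>E. e > 0 \<longrightarrow> zeta n i e > 0"
    and zeta_mono: "\<forall>n<N. \<forall>i\<in>{1..K n}. \<forall>e\<in>E. \<forall>e'\<in>E. e < e' \<longrightarrow> zeta n i e < zeta n i e'"
    and zeta_total: "\<forall>n<N. \<forall>i\<in>{1..K n}. \<forall>j\<in>{1..K n}.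
        (\<forall>e\<in>E. zeta n i e \<ge> zeta n j e) \<or> (\<forall>e\<in>E. zeta n i e \<le> zeta n j e)"
    and imax: "\<forall>n<N. imax n \<in> {1..K n} \<and> (\<forall>i\<in>{1..K n}. \<forall>e\<in>E. zeta n i e \<le> zeta n (imax n) e)"
    and imin: "\<forall>n<N. imin n \<in> {1..K n} \<and> (\<forall>i\<in>{1..K n}. \<forall>e\<in>E. zeta n (imin n) e \<le> zeta n i e)"
    and phiP_min: "(\<exists>lam\<ge>0. gdual N B a eta beta tau K P E zeta D lam = phiP)
                   \<and> (\<forall>lam\<ge>0. phiP \<le> gdual N B a eta beta tau K P E zeta D lam)"
    and phi0_min: "(\<exists>lam\<ge>0. gdual N B a eta beta tau K P E zeta (\<lambda>_. 0) lam = phi0)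
                   \<and> (\<forall>lam\<ge>0. phi0 \<le> gdual N B a eta beta tau K P E zeta (\<lambda>_. 0) lam)"
    and lam0_min: "lam0 \<ge> 0 \<and> (\<forall>lam\<ge>0. gdual_l N B a beta tau E zeta imin (\<lambda>_. 0) lam0
                                         \<le> gdual_l N B a beta tau E zeta imin (\<lambda>_. 0) lam)"
    and lamP_min: "lamP \<ge> 0 \<and> (\<forall>lam\<ge>0. gdual_l N B a beta tau E zeta imin D lamP
                                         \<le> gdual_l N B a beta tau E zeta imin D lam)"
  shows "gdual_l N B a beta tau E zeta imin D lamP
           - gdual_u N B a beta tau E zeta imax imin (\<lambda>_. 0) lamP \<le> phiP - phi0
       \<and> phiP - phi0 \<le> gdual_u N B a beta tau E zeta imax imin D lam0
           - gdual_l N B a beta tau E zeta imin (\<lambda>_. 0) lam0"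
proof -
  note sandwich = gdual_sandwich[OF a_nonneg beta_nonneg eta_prob P_stoch E_fin E_nonneg E_zero
      E_pos zeta_range zeta_pos imax imin]
  show ?thesis
    using minimum_gap_bounds[OF sandwich sandwich phiP_min phi0_min lamP_min lam0_min] by blast
qed

end
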